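(* Let $\pi:\mathbb R^n\times[0,\infty]\to[0,\infty]$ be a price function such that there is a function $f:\mathbb R^n\to[0,\infty)$ with $\pi(\mathbf q,v)=f(\mathbf q)^2/v$ for all $\mathbf q\in\mathbb R^n$, $v\in[0,\infty]$. Then $\pi$ is arbitrage-free if and only if $f$ is a semi-norm, i.e. $f(c\mathbf q)=|c|f(\mathbf q)$ for all $c\in\mathbb R$, $\mathbf q\in\mathbb R^n$, and $f(\mathbf q_1+\mathbf q_2)\le f(\mathbf q_1)+f(\mathbf q_2)$ for all $\mathbf q_1,\mathbf q_2\in\mathbb R^n$.
   Context: Conventions: $a/0=\infty$ for $a>0$, $0/0=0$, $a/\infty=0$, and $0\cdot\infty=0$. A query is a pair $(\mathbf q,v)$ with $\mathbf q\in\mathbb R^n$ and $v\in[0,\infty]$. The determinacy relation $\mathbf S\rightarrow\mathbf Q$ between finite multisets of queries and queries is the smallest relation satisfying: (Summation) for every $k\ge 0$, $\{(\mathbf q_1,v_1),\ldots,(\mathbf q_k,v_k)\}\rightarrow(\mathbf q_1+\cdots+\mathbf q_k,\,v_1+\cdots+v_k)$; (Scalar multiplication) for every $c\in\mathbb R$, $\{(\mathbf q,v)\}\rightarrow(c\mathbf q,c^2v)$; (Relaxation) $\{(\mathbf q,v)\}\rightarrow(\mathbf q,v')$ whenever $v\le v'$; (Transitivity) if $\mathbf S_1\rightarrow\mathbf Q_1,\ldots,\mathbf S_k\rightarrow\mathbf Q_k$ and $\{\mathbf Q_1,\ldots,\mathbf Q_k\}\rightarrow\mathbf Q$, then $\mathbf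 S_1\uplus\cdots\uplus\mathbf S_k\rightarrow\mathbf Q$. A price function $\pi$ is arbitrage-free if for every $m\ge 1$ and queries $\mathbf Q_1,\ldots,\mathbf Q_m,\mathbf Q$ with $\{\mathbf Q_1,\ldots,\mathbf Q_m\}\rightarrow\mathbf Q$ we have $\pi(\mathbf Q)\le\sum_{i=1}^m\pi(\mathbf Q_i)$. *)

theory Defs
  imports "HOL-Analysis.Analysis" "HOL-Library.Multiset" "HOL-Library.Extended_Nonnegative_Real"
begin

text \<open>A query is a pair (q, v) with q in R^n and v in [0,\<infinity>]; values live in ennreal,
whose arithmetic realizes the conventions a/0 = \<infinity> (a>0), 0/0 = 0, a/\<infinity> = 0, 0\<cdot>\<infinity> = 0.\<close>

type_synonym 'n query = "(real ^ 'n) \<times> ennreal"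

inductive determines :: "('n::finite) query multiset \<Rightarrow> 'n query \<Rightarrow> bool" where
  summation: "determines S (sum_mset (image_mset fst S), sum_mset (image_mset snd S))"
| scalar: "determines {#(q, v)#} (c *\<^sub>R q, ennreal (c\<^sup>2) * v)"
| relax: "v \<le> v' \<Longrightarrow> determines {#(q, v)#} (q, v')"
| trans: "\<lbrakk>\<forall>p \<in> set ps. determines (fst p) (snd p);
           determines (mset (map snd ps)) Q\<rbrakk>
          \<Longrightarrow> determines (sum_list (map fst ps)) Q"

definition arbitrage_free :: "(('n::finite) query \<Rightarrow> ennreal) \<Rightarrow> bool" where
  "arbitrage_free \<pi> \<longleftrightarrow>
     (\<forall>M Q. M \<noteq> {#} \<longrightarrow> determines M Q \<longrightarrow> \<pi> Q \<le> sum_mset (image_mset \<pi> M))"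

end

theory Submission
  imports Defs
begin

text \<open>With prices \<open>f(q)\<^sup>2/v\<close>, buying \<open>(q\<^sub>i, f q\<^sub>i)\<close> costs \<open>f q\<^sub>i\<close>, and the two
  purchases determine \<open>q\<^sub>1 + q\<^sub>2\<close> at variance \<open>f q\<^sub>1 + f q\<^sub>2\<close>, whose price is
  \<open>f(q\<^sub>1 + q\<^sub>2)\<^sup>2 / (f q\<^sub>1 + f q\<^sub>2)\<close>; so absence of arbitrage gives the triangle
  inequality. Scaling a query of variance 1 gives \<open>f(c q) \<le> \<bar>c\<bar> f q\<close>, and scaling back by
  \<open>1/c\<close> gives equality. Conversely, for a seminorm every derivation rule is price-monotone:
  scaling preserves prices, relaxation lowers them, and summation is handled by the
  triangle inequality followed by Cauchy--Schwarz in the form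
  \<open>(\<Sum>x\<^sub>i)\<^sup>2 / \<Sum>v\<^sub>i \<le> \<Sum>x\<^sub>i\<^sup>2 / v\<^sub>i\<close>, which survives zero and infinite variances.\<close>

definition seminorm :: "('a::real_vector \<Rightarrow> real) \<Rightarrow> bool" where
  "seminorm f \<longleftrightarrow>
     (\<forall>c q. f (c *\<^sub>R q) = \<bar>c\<bar> * f q) \<and> (\<forall>q1 q2. f (q1 + q2) \<le> f q1 + f q2)"

definition quadratic_price :: "(real ^ 'n \<Rightarrow> real) \<Rightarrow> 'n query \<Rightarrow> ennreal" where
  "quadratic_price f Q = ennreal ((f (fst Q))\<^sup>2) / snd Q"

lemma quadratic_price_Pair [simp]: "quadratic_price f (q, v) = ennreal ((f q)\<^sup>2) / v"
  by (simp add: quadratic_price_def)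

lemma ennreal_inverse_antimono: "(v::ennreal) \<le> v' \<Longrightarrow> inverse v' \<le> inverse v"
proof (cases "v = 0 \<or> v' = top")
  case False
  assume le: "v \<le> v'"
  obtain a where a: "v = ennreal a" "a > 0"
    using False le by (cases v rule: ennreal_cases) (auto simp: top_unique)
  obtain b where b: "v' = ennreal b" "b \<ge> 0"
    using False by (cases v' rule: ennreal_cases) auto
  have "a \<le> b" using le a b by simp
  then show ?thesis using a b by (simp add: inverse_ennreal ennreal_leI le_imp_inverse_le)
qed auto

lemma ennreal_divide_left_antimono: "(v::ennreal) \<le> v' \<Longrightarrow> x / v' \<le> x / v"
  unfolding divide_ennreal_def by (intro mult_left_mono ennreal_inverse_antimono) auto

lemma power2_add_divide_le:
  fixes x y a b :: real
  assumes "a > 0" "b > 0"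
  shows "(x + y)\<^sup>2 / (a + b) \<le> x\<^sup>2 / a + y\<^sup>2 / b"
proof -
  have "(x\<^sup>2 / a + y\<^sup>2 / b) * (a + b) - (x + y)\<^sup>2 = (x * b - y * a)\<^sup>2 / (a * b)"
    using assms by (simp add: field_simps power2_eq_square)
  also have "\<dots> \<ge> 0" using assms by simp
  finally show ?thesis using assms by (simp add: divide_le_eq)
qed

lemma ennreal_power2_add_divide_le:
  fixes x y :: real and v w :: ennreal
  assumes "x \<ge> 0" "y \<ge> 0"
  shows "ennreal ((x + y)\<^sup>2) / (v + w) \<le> ennreal (x\<^sup>2) / v + ennreal (y\<^sup>2) / w"
proof -
  have zero_weight: "ennreal ((x + y)\<^sup>2) / (0 + w) \<le> ennreal (x\<^sup>2) / 0 + ennreal (y\<^sup>2) / w"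
    for x y :: real and w :: ennreal
    by (cases "x = 0") auto
  consider "v = 0" | "w = 0" | "v = top \<or> w = top"
    | a b where "v = ennreal a" "w = ennreal b" "a > 0" "b > 0"
    by (cases v rule: ennreal_cases; cases w rule: ennreal_cases) (auto simp: less_le)
  then show ?thesis
  proof cases
    case 1 then show ?thesis using zero_weight by simp
  next
    case 2 then show ?thesis using zero_weight[of y x v] by (simp add: add.commute)
  next
    case 3 then show ?thesis by auto
  next
    case 4
    have "ennreal ((x + y)\<^sup>2) / (v + w) = ennreal ((x + y)\<^sup>2 / (a + b))"
      using 4 by (simp add: divide_ennreal less_imp_le flip: ennreal_plus)
    also have "\<dots> \<le> ennreal (x\<^sup>2 / a + y\<^sup>2 / b)"
      using 4 by (intro ennreal_leI power2_add_divide_le)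
    also have "\<dots> = ennreal (x\<^sup>2) / v + ennreal (y\<^sup>2) / w"
      using 4 by (simp add: divide_ennreal)
    finally show ?thesis .
  qed
qed

lemma ennreal_sum_mset_power2_divide_le:
  fixes x :: "'a \<Rightarrow> real" and v :: "'a \<Rightarrow> ennreal"
  assumes "\<And>i. x i \<ge> 0"
  shows "ennreal ((\<Sum>i\<in>#S. x i)\<^sup>2) / (\<Sum>i\<in>#S. v i) \<le> (\<Sum>i\<in>#S. ennreal ((x i)\<^sup>2) / v i)"
proof (induction S)
  case (add i S)
  have "0 \<le> (\<Sum>i\<in>#S. x i)"
    using sum_mset_mono[of S "\<lambda>_. 0" x] assms by simp
  then have "ennreal ((x i + (\<Sum>i\<in>#S. x i))\<^sup>2) / (v i + (\<Sum>i\<in>#S. v i))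
      \<le> ennreal ((x i)\<^sup>2) / v i + ennreal ((\<Sum>i\<in>#S. x i)\<^sup>2) / (\<Sum>i\<in>#S. v i)"
    using assms by (intro ennreal_power2_add_divide_le)
  then show ?case using add.IH by (simp add: add_left_mono order_trans)
qed simp

lemma seminorm_zero: "seminorm f \<Longrightarrow> f 0 = 0"
  unfolding seminorm_def by (metis abs_zero mult_zero_left scaleR_zero_left)

lemma seminorm_nonneg:
  assumes "seminorm f"
  shows "f q \<ge> 0"
proof -
  have "0 = f (q + (-1) *\<^sub>R q)" using seminorm_zero[OF assms] by simp
  also have "\<dots> \<le> f q + f ((-1) *\<^sub>R q)" using assms unfolding seminorm_def by blast
  also have "\<dots> = 2 * f q" using assms unfolding seminorm_def by (metis abs_neg_one mult_1 mult_2)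
  finally show ?thesis by simp
qed

lemma seminorm_sum_mset_le:
  assumes "seminorm f"
  shows "f (\<Sum>i\<in>#S. g i) \<le> (\<Sum>i\<in>#S. f (g i))"
proof (induction S)
  case (add i S)
  have "f (g i + (\<Sum>i\<in>#S. g i)) \<le> f (g i) + f (\<Sum>i\<in>#S. g i)"
    using assms unfolding seminorm_def by blast
  then show ?case using add.IH by simp
qed (simp add: seminorm_zero[OF assms])

lemma quadratic_price_scaleR_le:
  assumes "seminorm f"
  shows "quadratic_price f (c *\<^sub>R q, ennreal (c\<^sup>2) * v) \<le> quadratic_price f (q, v)"
proof (cases "c = 0")
  case True
  then show ?thesis using seminorm_zero[OF assms] by simp
next
  case False
  have "quadratic_price f (c *\<^sub>R q, ennreal (c\<^sup>2) * v)
      = ennreal ((f q)\<^sup>2) * ennreal (c\<^sup>2) / (v * ennreal (c\<^sup>2))"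
    using assms unfolding seminorm_def
    by (simp add: power_mult_distrib ennreal_mult' mult.commute)
  also have "\<dots> = quadratic_price f (q, v)"
    using False by (subst divide_mult_eq) auto
  finally show ?thesis by simp
qed

lemma quadratic_price_sum_mset_le:
  assumes "seminorm f"
  shows "quadratic_price f (\<Sum>P\<in>#S. fst P, \<Sum>P\<in>#S. snd P) \<le> (\<Sum>P\<in>#S. quadratic_price f P)"
proof -
  have "quadratic_price f (\<Sum>P\<in>#S. fst P, \<Sum>P\<in>#S. snd P)
      = ennreal ((f (\<Sum>P\<in>#S. fst P))\<^sup>2) / (\<Sum>P\<in>#S. snd P)"
    by simp
  also have "\<dots> \<le> ennreal ((\<Sum>P\<in>#S. f (fst P))\<^sup>2) / (\<Sum>P\<in>#S. snd P)"
    using seminorm_sum_mset_le[OF assms] seminorm_nonneg[OF assms]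
    by (intro divide_right_mono_ennreal ennreal_leI power_mono) auto
  also have "\<dots> \<le> (\<Sum>P\<in>#S. quadratic_price f P)"
    unfolding quadratic_price_def
    using seminorm_nonneg[OF assms] by (intro ennreal_sum_mset_power2_divide_le)
  finally show ?thesis .
qed

lemma seminorm_determines_price_le:
  assumes "seminorm f"
  shows "determines M Q \<Longrightarrow> quadratic_price f Q \<le> (\<Sum>P\<in>#M. quadratic_price f P)"
proof (induction rule: determines.induct)
  case (summation S)
  show ?case using quadratic_price_sum_mset_le[OF assms] by simp
next
  case (scalar q v c)
  show ?case using quadratic_price_scaleR_le[OF assms] by simp
next
  case (relax v v' q)
  then show ?case by (simp add: ennreal_divide_left_antimono)
next
  case (trans ps Q)
  have "(\<Sum>P\<in>#mset (map snd ps). quadratic_price f P)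
      \<le> (\<Sum>P\<in>#sum_list (map fst ps). quadratic_price f P)"
    using trans.IH(1) by (induction ps) (auto intro: add_mono)
  with trans.IH(2) show ?case by (rule order.trans)
qed

lemma seminorm_imp_arbitrage_free: "seminorm f \<Longrightarrow> arbitrage_free (quadratic_price f)"
  unfolding arbitrage_free_def using seminorm_determines_price_le by blast

lemma arbitrage_freeD:
  "arbitrage_free \<pi> \<Longrightarrow> determines M Q \<Longrightarrow> M \<noteq> {#} \<Longrightarrow> \<pi> Q \<le> (\<Sum>P\<in>#M. \<pi> P)"
  unfolding arbitrage_free_def by blast

lemma arbitrage_free_quadratic_price_scaleR_le:
  assumes "arbitrage_free (quadratic_price f)" and "\<And>q. f q \<ge> 0"
  shows "f (c *\<^sub>R q) \<le> \<bar>c\<bar> * f q"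
proof -
  have "determines {#(q, 1)#} (c *\<^sub>R q, ennreal (c\<^sup>2) * 1)"
    by (rule determines.scalar)
  then have "quadratic_price f (c *\<^sub>R q, ennreal (c\<^sup>2) * 1) \<le> (\<Sum>P\<in>#{#(q, 1)#}. quadratic_price f P)"
    by (rule arbitrage_freeD[OF assms(1)]) simp
  then have price_le: "ennreal ((f (c *\<^sub>R q))\<^sup>2) / ennreal (c\<^sup>2) \<le> ennreal ((f q)\<^sup>2)"
    by (simp add: divide_ennreal_def)
  show ?thesis
  proof (cases "c = 0")
    case True
    then show ?thesis using price_le by (auto simp: top_unique split: if_splits)
  next
    case False
    then have "(f (c *\<^sub>R q))\<^sup>2 / c\<^sup>2 \<le> (f q)\<^sup>2"
      using price_le by (simp add: divide_ennreal)
    then have "(f (c *\<^sub>R q))\<^sup>2 \<le> (f q)\<^sup>2 * c\<^sup>2"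
      using False by (simp add: divide_le_eq)
    also have "\<dots> = (\<bar>c\<bar> * f q)\<^sup>2"
      by (simp add: power_mult_distrib)
    finally show ?thesis by (rule power2_le_imp_le) (simp add: assms(2))
  qed
qed

lemma scaleR_le_imp_homogeneous:
  fixes f :: "'a::real_vector \<Rightarrow> real"
  assumes le: "\<And>c q. f (c *\<^sub>R q) \<le> \<bar>c\<bar> * f q" and nonneg: "\<And>q. f q \<ge> 0"
  shows "f (c *\<^sub>R q) = \<bar>c\<bar> * f q"
proof (cases "c = 0")
  case True
  then show ?thesis using le[of 0 q] nonneg[of 0] by simp
next
  case False
  have "f q = f (inverse c *\<^sub>R (c *\<^sub>R q))" using False by simp
  also have "\<dots> \<le> \<bar>inverse c\<bar> * f (c *\<^sub>R q)" by (rule le)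
  finally have "\<bar>c\<bar> * f q \<le> f (c *\<^sub>R q)"
    using False by (simp add: field_simps)
  with le[of c q] show ?thesis by simp
qed

lemma quadratic_price_at_own_value:
  "f q \<ge> 0 \<Longrightarrow> quadratic_price f (q, ennreal (f q)) = ennreal (f q)"
  by (cases "f q = 0") (simp_all add: divide_ennreal power2_eq_square)

lemma arbitrage_free_quadratic_price_triangle:
  assumes "arbitrage_free (quadratic_price f)" and nonneg: "\<And>q. f q \<ge> 0"
  shows "f (q1 + q2) \<le> f q1 + f q2"
proof -
  let ?M = "{#(q1, ennreal (f q1)), (q2, ennreal (f q2))#}"
  let ?s = "f q1 + f q2"
  have "determines ?M (q1 + q2, ennreal ?s)"
    using determines.summation[of ?M] nonneg by simp
  then have "quadratic_price f (q1 + q2, ennreal ?s) \<le> (\<Sum>P\<in>#?M. quadratic_price f P)"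
    by (rule arbitrage_freeD[OF assms(1)]) simp
  also have "\<dots> = ennreal ?s"
    using nonneg by (simp add: quadratic_price_at_own_value del: quadratic_price_Pair)
  finally have price_le: "ennreal ((f (q1 + q2))\<^sup>2) / ennreal ?s \<le> ennreal ?s" by simp
  show ?thesis
  proof (cases "?s = 0")
    case True
    then show ?thesis using price_le by (simp split: if_splits)
  next
    case False
    then have "?s > 0" using nonneg[of q1] nonneg[of q2] by linarith
    with price_le have "(f (q1 + q2))\<^sup>2 \<le> ?s\<^sup>2"
      by (simp add: divide_ennreal divide_le_eq power2_eq_square)
    then show ?thesis by (rule power2_le_imp_le) (simp add: nonneg add_nonneg_nonneg)
  qed
qed

lemma arbitrage_free_quadratic_price_iff_seminorm:
  assumes nonneg: "\<And>q. f q \<ge> 0"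
  shows "arbitrage_free (quadratic_price f) \<longleftrightarrow> seminorm f"
proof
  assume af: "arbitrage_free (quadratic_price f)"
  have "f (c *\<^sub>R q) = \<bar>c\<bar> * f q" for c q
    using scaleR_le_imp_homogeneous[OF arbitrage_free_quadratic_price_scaleR_le[OF af nonneg] nonneg] .
  moreover have "f (q1 + q2) \<le> f q1 + f q2" for q1 q2
    using arbitrage_free_quadratic_price_triangle[OF af nonneg] .
  ultimately show "seminorm f" unfolding seminorm_def by blast
qed (rule seminorm_imp_arbitrage_free)

theorem theorem1:
  fixes \<pi> :: "'n::finite query \<Rightarrow> ennreal" and f :: "real ^ 'n \<Rightarrow> real"
  assumes f_nonneg: "\<forall>q. f q \<ge> 0"
    and price: "\<forall>q v. \<pi> (q, v) = ennreal ((f q)\<^sup>2) / v"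
  shows "arbitrage_free \<pi> \<longleftrightarrow>
           ((\<forall>c q. f (c *\<^sub>R q) = \<bar>c\<bar> * f q) \<and>
            (\<forall>q1 q2. f (q1 + q2) \<le> f q1 + f q2))"
proof -
  have "\<pi> = quadratic_price f" using price by (auto simp: quadratic_price_def)
  then show ?thesis
    using arbitrage_free_quadratic_price_iff_seminorm[of f] f_nonneg by (simp add: seminorm_def)
qed

end
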